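(* Let $n\ge2$ and let $C\subset\mathbb{S}^{n-1}$ be a spherical code with $|C|=n+1$, and let $y_C:=\frac{1}{n+1}\sum_{y\in C}y$ be its centroid. Then there exists $x\in\mathbb{S}^{n-1}$ with $x\cdot y\in[-1,1/n]$ for all $y\in C$, and $$\min\{x\cdot y_C:\ x\in\mathbb{S}^{n-1},\ x\cdot y\in[-1,1/n]\ \text{for all } y\in C\}\le0.$$
   Context: $\mathbb{S}^{n-1}$ is the unit sphere in $\mathbb{R}^n$; a spherical code is a finite set of distinct points on it. *)

theory Defs
  imports "HOL-Analysis.Analysis"
begin

end

theory Submission
  imports Defs
begin

text \<open>Since the constraint set is compact, it suffices to find a unit vector \<open>x\<close> with
  \<open>x \<bullet> y \<le> 1/n\<close> on \<open>C\<close> and \<open>x \<bullet> \<Sum>C \<le> 0\<close>. If \<open>0\<close> is not in the convex hull of \<open>C\<close>,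
  a separating hyperplane gives \<open>x\<close> with \<open>x \<bullet> y \<le> 0\<close> on \<open>C\<close>. Otherwise write
  \<open>0 = \<Sum>\<^sub>y \<lambda>\<^sub>y y\<close> as a convex combination and pick \<open>k\<close> with \<open>\<lambda>\<^sub>k \<le> 1/(n+1)\<close>. The other
  \<open>n\<close> points lie on an affine hyperplane \<open>{z. x \<bullet> z = h}\<close> whose unit normal \<open>x\<close> is oriented
  so that \<open>t = x \<bullet> k \<le> 0\<close>. Pairing the convex combination with \<open>x\<close> gives
  \<open>(1 - \<lambda>\<^sub>k) h + \<lambda>\<^sub>k t = 0\<close>, whence \<open>h \<le> \<lambda>\<^sub>k / (1 - \<lambda>\<^sub>k) \<le> 1/n\<close> and
  \<open>x \<bullet> \<Sum>C = t + n h \<le> 0\<close>.\<close>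

lemma inner_unit_ge_minus_one:
  fixes x y :: "'a::real_inner"
  assumes "norm x = 1" "norm y = 1"
  shows "-1 \<le> x \<bullet> y"
  using Cauchy_Schwarz_ineq2[of x y] assms by (simp add: abs_le_iff)

lemma unit_normal_of_hyperplane_through_points:
  fixes S :: "'a::euclidean_space set"
  assumes "finite S" "card S \<le> DIM('a)"
  obtains u h where "norm u = 1" "u \<bullet> k \<le> 0" "\<forall>c\<in>S. u \<bullet> c = h"
proof -
  have "aff_dim S < DIM('a)"
    using aff_dim_le_card[OF assms(1)] assms(2) by linarith
  then obtain a b where "a \<noteq> 0" and ab: "S \<subseteq> {x. a \<bullet> x = b}"
    by (rule aff_lowdim_subset_hyperplane)
  define v where "v = a /\<^sub>R norm a"
  have v: "norm v = 1" "\<forall>c\<in>S. v \<bullet> c = b / norm a"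
    using \<open>a \<noteq> 0\<close> ab by (auto simp: v_def field_simps)
  show ?thesis
  proof (cases "v \<bullet> k \<le> 0")
    case True
    with v show ?thesis by (intro that) auto
  next
    case False
    with v show ?thesis by (intro that[of "-v" "- (b / norm a)"]) auto
  qed
qed

lemma exists_le_average:
  fixes f :: "'a \<Rightarrow> real"
  assumes "finite A" "A \<noteq> {}"
  shows "\<exists>a\<in>A. f a \<le> sum f A / card A"
proof (rule ccontr)
  assume "\<not> ?thesis"
  then have "\<And>a. a \<in> A \<Longrightarrow> sum f A / card A < f a" by (simp add: not_le)
  then have "(\<Sum>a\<in>A. sum f A / card A) < sum f A"
    by (rule sum_strict_mono[OF assms])
  with assms show False by simp
qed

lemma unit_vector_nonpos_inner_if_0_notin_convex_hull:
  fixes C :: "'a::euclidean_space set"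
  assumes "finite C" "0 \<notin> convex hull C"
  obtains u where "norm u = 1" "\<forall>c\<in>C. u \<bullet> c \<le> 0"
proof -
  have "closed (convex hull C)"
    using assms(1) by (simp add: compact_imp_closed finite_imp_compact_convex_hull)
  then obtain a b where "a \<noteq> 0" "0 < b" and ab: "\<forall>x\<in>convex hull C. a \<bullet> x > b"
    using separating_hyperplane_closed_0 assms(2) by blast
  have "\<forall>c\<in>C. (- a /\<^sub>R norm a) \<bullet> c \<le> 0"
    using ab hull_inc[of _ C] \<open>0 < b\<close> by (fastforce intro: divide_nonneg_pos)
  with \<open>a \<noteq> 0\<close> show ?thesis by (intro that[of "- a /\<^sub>R norm a"]) auto
qed

lemma zero_convex_combination_bounds:
  fixes lam t h :: real and n :: nat
  assumes "n \<ge> 1" "0 \<le> lam" "lam * (n + 1) \<le> 1" "-1 \<le> t" "t \<le> 0"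
    and balance: "(1 - lam) * h + lam * t = 0"
  shows "h \<le> 1 / n" "t + n * h \<le> 0"
proof -
  have "lam * 2 \<le> lam * (n + 1)" using assms(1,2) by (intro mult_left_mono) auto
  then have "lam < 1" using assms(3) by linarith
  then have h: "h = lam * (- t) / (1 - lam)" using balance by (simp add: field_simps)
  have "lam * (- t) \<le> lam" using mult_left_mono[of "- t" 1 lam] assms by simp
  also have "lam \<le> (1 - lam) / n" using assms by (simp add: field_simps)
  finally have "h \<le> (1 - lam) / n / (1 - lam)"
    unfolding h using \<open>lam < 1\<close> by (intro divide_right_mono) auto
  then show "h \<le> 1 / n" using \<open>lam < 1\<close> by simp
  have "n * (lam * (- t)) \<le> (1 - lam) * (- t)"
    using mult_right_mono[of "n * lam" "1 - lam" "- t"] assms by (simp add: algebra_simps)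
  then have "n * (lam * (- t)) / (1 - lam) \<le> (1 - lam) * (- t) / (1 - lam)"
    using \<open>lam < 1\<close> by (intro divide_right_mono) auto
  moreover have "n * h = n * (lam * (- t)) / (1 - lam)" unfolding h by simp
  ultimately show "t + n * h \<le> 0" using \<open>lam < 1\<close> by simp
qed

lemma unit_vector_inner_le_inv_dim_if_0_in_convex_hull:
  fixes C :: "'a::euclidean_space set"
  assumes "finite C" "C \<subseteq> sphere 0 1" "card C = DIM('a) + 1" "0 \<in> convex hull C"
  obtains x where "norm x = 1" "\<forall>y\<in>C. x \<bullet> y \<le> 1 / DIM('a)" "x \<bullet> \<Sum>C \<le> 0"
proof -
  let ?n = "DIM('a)"
  obtain lam where lam: "\<forall>c\<in>C. 0 \<le> lam c" "sum lam C = 1" "(\<Sum>c\<in>C. lam c *\<^sub>R c) = 0"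
    using assms(4) convex_hull_finite[OF assms(1)] by auto
  have "C \<noteq> {}" using assms(3) by auto
  then obtain k where k: "k \<in> C" "lam k \<le> sum lam C / card C"
    using exists_le_average[OF assms(1)] by blast
  have card_rest: "card (C - {k}) = ?n"
    using assms(1,3) k(1) by simp
  obtain x h where x: "norm x = 1" "x \<bullet> k \<le> 0" and h: "\<forall>c\<in>C - {k}. x \<bullet> c = h"
    using unit_normal_of_hyperplane_through_points[of "C - {k}" k] assms(1) card_rest by auto
  have split_k: "(\<Sum>c\<in>C. f c) = f k + (\<Sum>c\<in>C - {k}. f c)" for f :: "'a \<Rightarrow> real"
    using assms(1) k(1) by (simp add: sum.remove)
  have "0 = x \<bullet> (\<Sum>c\<in>C. lam c *\<^sub>R c)" using lam(3) by simp
  also have "\<dots> = lam k * (x \<bullet> k) + (\<Sum>c\<in>C - {k}. lam c * h)"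
    using split_k h by (simp add: inner_sum_right)
  also have "\<dots> = lam k * (x \<bullet> k) + (1 - lam k) * h"
    using lam(2) split_k[of lam] by (simp add: sum_distrib_right[symmetric])
  finally have balance: "(1 - lam k) * h + lam k * (x \<bullet> k) = 0" by simp
  have "0 \<le> lam k" using lam(1) k(1) by blast
  moreover have "lam k * (?n + 1) \<le> 1"
    using k(2) lam(2) assms(3) by (simp add: field_simps)
  moreover have "-1 \<le> x \<bullet> k"
    using assms(2) k(1) by (intro inner_unit_ge_minus_one x(1)) auto
  ultimately have bounds: "h \<le> 1 / ?n" "x \<bullet> k + ?n * h \<le> 0"
    using zero_convex_combination_bounds[OF _ _ _ _ x(2) balance, of ?n] by simp_all
  have "x \<bullet> y \<le> 1 / ?n" if "y \<in> C" for y
  proof (cases "y = k")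
    case True
    have "0 \<le> 1 / real ?n" by simp
    with x(2) show ?thesis unfolding True by linarith
  next
    case False
    with that h bounds(1) show ?thesis by simp
  qed
  moreover have "x \<bullet> \<Sum>C = x \<bullet> k + ?n * h"
    using split_k[of "inner x"] h card_rest by (simp add: inner_sum_right)
  ultimately show ?thesis using that x(1) bounds(2) by simp
qed

lemma unit_vector_inner_le_inv_dim:
  fixes C :: "'a::euclidean_space set"
  assumes "finite C" "C \<subseteq> sphere 0 1" "card C = DIM('a) + 1"
  obtains x where "norm x = 1" "\<forall>y\<in>C. x \<bullet> y \<le> 1 / DIM('a)" "x \<bullet> \<Sum>C \<le> 0"
proof (cases "0 \<in> convex hull C")
  case True
  from assms True that show ?thesis by (rule unit_vector_inner_le_inv_dim_if_0_in_convex_hull)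
next
  case False
  then obtain u where u: "norm u = 1" "\<forall>c\<in>C. u \<bullet> c \<le> 0"
    using unit_vector_nonpos_inner_if_0_notin_convex_hull assms(1) by blast
  have "u \<bullet> c \<le> 1 / DIM('a)" if "c \<in> C" for c
  proof -
    have "u \<bullet> c \<le> 0" using u(2) that by blast
    moreover have "(0::real) \<le> 1 / DIM('a)" by simp
    ultimately show ?thesis by linarith
  qed
  moreover have "u \<bullet> \<Sum>C \<le> 0"
    using u(2) by (simp add: inner_sum_right sum_nonpos)
  ultimately show ?thesis using u(1) that by blast
qed

lemma compact_sphere_inner_bounded:
  fixes C :: "'a::euclidean_space set"
  shows "compact {x \<in> sphere 0 1. \<forall>y\<in>C. x \<bullet> y \<in> {a..b}}"
proof -
  have "{x \<in> sphere 0 1. \<forall>y\<in>C. x \<bullet> y \<in> {a..b}} =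
        sphere 0 1 \<inter> (\<Inter>y\<in>C. {x. a \<le> x \<bullet> y} \<inter> {x. x \<bullet> y \<le> b})"
    by auto
  moreover have "closed (\<Inter>y\<in>C. {x::'a. a \<le> x \<bullet> y} \<inter> {x. x \<bullet> y \<le> b})"
    by (intro closed_INT closed_Int ballI closed_Collect_le continuous_intros)
  ultimately show ?thesis by (simp add: compact_Int_closed)
qed

theorem lemma6p3:
  fixes C :: "(real ^ 'n) set"
  assumes n2: "CARD('n) \<ge> 2"
    and finC: "finite C"
    and onS: "C \<subseteq> sphere 0 1"
    and cardC: "card C = CARD('n) + 1"
  defines "yC \<equiv> (1 / real (CARD('n) + 1)) *\<^sub>R (\<Sum>y\<in>C. y)"
    and "F \<equiv> {x \<in> sphere (0 :: real ^ 'n) 1.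
                 \<forall>y\<in>C. x \<bullet> y \<in> {-1 .. 1 / real CARD('n)}}"
  shows "F \<noteq> {} \<and> (\<exists>x\<in>F. (\<forall>z\<in>F. x \<bullet> yC \<le> z \<bullet> yC) \<and> x \<bullet> yC \<le> 0)"
proof -
  obtain x where x: "norm x = 1" "\<forall>y\<in>C. x \<bullet> y \<le> 1 / CARD('n)" "x \<bullet> \<Sum>C \<le> 0"
    using unit_vector_inner_le_inv_dim[OF finC onS] cardC by auto
  have "\<forall>y\<in>C. -1 \<le> x \<bullet> y"
    using onS by (auto intro!: inner_unit_ge_minus_one x(1))
  with x have "x \<in> F" by (simp add: F_def)
  moreover have "x \<bullet> yC \<le> 0"
    using x(3) by (simp add: yC_def divide_nonpos_pos add_pos_nonneg)
  moreover have "compact F"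
    unfolding F_def by (rule compact_sphere_inner_bounded)
  moreover have "continuous_on F (\<lambda>z. z \<bullet> yC)"
    by (intro continuous_intros)
  ultimately obtain m where "m \<in> F" "\<forall>z\<in>F. m \<bullet> yC \<le> z \<bullet> yC"
    using continuous_attains_inf[of F "\<lambda>z. z \<bullet> yC"] by blast
  with \<open>x \<in> F\<close> \<open>x \<bullet> yC \<le> 0\<close> show ?thesis by (meson empty_iff order_trans)
qed

end
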